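(* Let $R$ and $S$ be commutative rings with identity, $f:R\to S$ a ring homomorphism, and $J$ a nonzero proper ideal of $S$. Then $R\bowtie^f J$ is a pm-ring if and only if $R$ is a pm-ring and, for every prime ideal $\mathfrak{q}$ of $S$ with $J\not\subseteq\mathfrak{q}$, the following equality holds: $$\big\lvert \big(\operatorname{Max}(S)\cap V(\mathfrak{q})\big)\setminus V(J)\big\rvert + \big\lvert \operatorname{Max}(R)\cap V\big(f^{-1}(\mathfrak{q}+J)\big)\big\rvert = 1.$$
   Context: The amalgamation of $R$ with $S$ along $J$ with respect to $f$ is the subring $R\bowtie^f J:=\{(r,f(r)+j)\mid r\in R,\ j\in J\}$ of $R\times S$. A commutative ring is a pm-ring if every prime ideal is contained in a unique maximal ideal. For a commutative ring $A$ and an ideal $I$ of $A$, $\operatorname{Max}(A)$ denotes the set of maximal ideals of $A$ and $V(I)$ the set of prime ideals of $A$ containing $I$ (so $V(R)=\emptyset$). *)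

theory Defs
  imports "HOL-Algebra.Algebra"
begin

definition amalg :: "('a, 'm) ring_scheme \<Rightarrow> ('b, 'n) ring_scheme \<Rightarrow> ('a \<Rightarrow> 'b) \<Rightarrow> 'b set \<Rightarrow> ('a \<times> 'b) ring"
  where "amalg R S f J = (RDirProd R S)\<lparr>carrier :=
           {(r, f r \<oplus>\<^bsub>S\<^esub> j) | r j. r \<in> carrier R \<and> j \<in> J}\<rparr>"

definition MaxSpec :: "('a, 'm) ring_scheme \<Rightarrow> 'a set set"
  where "MaxSpec A = {M. maximalideal M A}"

definition VarI :: "('a, 'm) ring_scheme \<Rightarrow> 'a set \<Rightarrow> 'a set set"
  where "VarI A I = {P. primeideal P A \<and> I \<subseteq> P}"

definition pm_ring :: "('a, 'm) ring_scheme \<Rightarrow> bool"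
  where "pm_ring A \<longleftrightarrow> (\<forall>P. primeideal P A \<longrightarrow> (\<exists>!M. maximalideal M A \<and> P \<subseteq> M))"

end

theory Submission
  imports Defs
begin

text \<open>Every prime ideal of \<open>R \<bowtie>\<^sup>f J\<close> is the preimage of a prime \<open>p\<close> of \<open>R\<close> under the
  first projection, or the preimage of a prime \<open>q\<close> of \<open>S\<close> with \<open>\<not> J \<subseteq> q\<close> under the second
  one, and the maximal ideals are exactly the preimages of maximal ideals of \<open>R\<close> and of maximal
  ideals of \<open>S\<close> not containing \<open>J\<close>. The lift of \<open>p\<close> lies only in the lifts of the maximal
  ideals of \<open>R\<close> above \<open>p\<close>; the lift of \<open>q\<close> lies in the lifts of the maximal \<open>n \<supseteq> q\<close> of
  \<open>S\<close> with \<open>\<not> J \<subseteq> n\<close> and of the maximal \<open>m\<close> of \<open>R\<close> containing \<open>f\<inverse>(q + J)\<close>. As the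
  lifting maps are injective with disjoint images, the pm property of \<open>R \<bowtie>\<^sup>f J\<close> splits into
  the pm property of \<open>R\<close> and the counting condition at every such \<open>q\<close>.\<close>

lemma (in cring) cring_idealI:
  assumes "I \<subseteq> carrier R" "\<zero> \<in> I"
    and "\<And>a b. a \<in> I \<Longrightarrow> b \<in> I \<Longrightarrow> a \<oplus> b \<in> I"
    and "\<And>a x. a \<in> I \<Longrightarrow> x \<in> carrier R \<Longrightarrow> x \<otimes> a \<in> I"
  shows "ideal I R"
proof (rule idealI[OF ring_axioms])
  have "\<ominus> a \<in> I" if "a \<in> I" for a
  proof -
    have "\<ominus> a = (\<ominus> \<one>) \<otimes> a" using that assms(1) by (auto simp: l_minus)
    then show ?thesis using assms(4)[OF that] by simp
  qed
  then show "subgroup I (add_monoid R)"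
    using assms(1-3) by (intro add.subgroupI) (auto simp: a_inv_def)
  show "x \<otimes> a \<in> I" if "a \<in> I" "x \<in> carrier R" for a x
    using assms(4) that .
  show "a \<otimes> x \<in> I" if "a \<in> I" "x \<in> carrier R" for a x
    using assms(1,4) that m_comm by (metis subsetD)
qed

lemma (in cring) maximalideal_inv_mod:
  assumes "maximalideal m R" "s \<in> carrier R" "s \<notin> m"
  obtains b where "b \<in> carrier R" "\<one> \<ominus> b \<otimes> s \<in> m"
proof -
  interpret maximalideal m R by fact
  have "ideal (m <+>\<^bsub>R\<^esub> PIdl s) R"
    by (intro add_ideals is_ideal cgenideal_ideal assms)
  moreover have "m \<subseteq> m <+>\<^bsub>R\<^esub> PIdl s"
  proof
    fix x assume "x \<in> m"
    have "x = x \<oplus> \<zero> \<otimes> s" using \<open>x \<in> m\<close> assms(2) by simp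
    then show "x \<in> m <+>\<^bsub>R\<^esub> PIdl s" using \<open>x \<in> m\<close> unfolding set_add_def' cgenideal_def by blast
  qed
  moreover have "s \<in> m <+>\<^bsub>R\<^esub> PIdl s"
  proof -
    have "s = \<zero> \<oplus> \<one> \<otimes> s" using assms(2) by simp
    then show ?thesis unfolding set_add_def' cgenideal_def using zero_closed by blast
  qed
  ultimately have "m <+>\<^bsub>R\<^esub> PIdl s = carrier R"
    using I_maximal[of "m <+>\<^bsub>R\<^esub> PIdl s"] assms(3) additive_subgroup.a_subset ideal.axioms(1) by metis
  then have "\<one> \<in> m <+>\<^bsub>R\<^esub> PIdl s" by simp
  then obtain a b where ab: "a \<in> m" "b \<in> carrier R" "\<one> = a \<oplus> b \<otimes> s"
    unfolding set_add_def' cgenideal_def by blast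
  have "\<one> \<ominus> b \<otimes> s = a \<oplus> b \<otimes> s \<ominus> b \<otimes> s" using ab(3) by simp
  also have "\<dots> = a" using ab(2) assms(2) subsetD[OF a_subset ab(1)] by algebra
  finally show ?thesis using that[OF ab(2)] ab(1) by simp
qed

lemma (in ring_hom_cring) maximalideal_of_maximalideal_vimage:
  assumes m: "primeideal m S" and e: "e \<in> carrier S" "e \<notin> m"
    and e_mult: "\<And>s. s \<in> carrier S \<Longrightarrow> \<exists>r\<in>carrier R. h r = e \<otimes>\<^bsub>S\<^esub> s"
    and M: "maximalideal {r \<in> carrier R. h r \<in> m} R"
  shows "maximalideal m S"
proof -
  interpret m: primeideal m S by fact
  show ?thesis
  proof (rule maximalidealI[OF m.is_ideal m.I_notcarr])
    fix I assume I: "ideal I S" "m \<subseteq> I" "I \<subseteq> carrier S"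
    let ?N = "{r \<in> carrier R. h r \<in> I}"
    have "?N = {r \<in> carrier R. h r \<in> m} \<or> ?N = carrier R"
      using maximalideal.I_maximal[OF M ring.ideal_vimage[OF I(1)]] I(2) by blast
    then show "I = m \<or> I = carrier S"
    proof
      assume N: "?N = {r \<in> carrier R. h r \<in> m}"
      have "I \<subseteq> m"
      proof
        fix s assume s: "s \<in> I"
        with I(3) have "s \<in> carrier S" by blast
        from e_mult[OF this] obtain r where r: "r \<in> carrier R" "h r = e \<otimes>\<^bsub>S\<^esub> s" ..
        then have "r \<in> ?N" using ideal.I_l_closed[OF I(1) s e(1)] by simp
        then have "e \<otimes>\<^bsub>S\<^esub> s \<in> m" using N r by simp
        then show "s \<in> m" using m.I_prime[OF e(1) \<open>s \<in> carrier S\<close>] e(2) by blast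
      qed
      then show ?thesis using I(2) by blast
    next
      assume "?N = carrier R"
      then have "\<one> \<in> ?N" by simp
      then have "\<one>\<^bsub>S\<^esub> \<in> I" by simp
      then show ?thesis using ideal.one_imp_carrier[OF I(1)] by blast
    qed
  qed
qed

lemma (in ring_hom_cring) maximalideal_vimage:
  assumes max: "maximalideal m S" and e: "e \<in> carrier S" "e \<notin> m"
    and e_mult: "\<And>s. s \<in> carrier S \<Longrightarrow> \<exists>r\<in>carrier R. h r = e \<otimes>\<^bsub>S\<^esub> s"
  shows "maximalideal {r \<in> carrier R. h r \<in> m} R" (is "maximalideal ?M R")
proof -
  interpret m: maximalideal m S by fact
  have M: "primeideal ?M R"
    by (rule ring.primeideal_vimage[OF R.is_cring S.maximalideal_prime[OF max]])
  obtain c where c: "c \<in> carrier S" "\<one>\<^bsub>S\<^esub> \<ominus>\<^bsub>S\<^esub> c \<otimes>\<^bsub>S\<^esub> e \<in> m"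
    using S.maximalideal_inv_mod[OF max e] .
  show ?thesis
  proof (rule maximalidealI[OF primeideal.axioms(1)[OF M] primeideal.I_notcarr[OF M]])
    fix I assume I: "ideal I R" "?M \<subseteq> I" "I \<subseteq> carrier R"
    show "I = ?M \<or> I = carrier R"
    proof (cases "I \<subseteq> ?M")
      case True
      then show ?thesis using I(2) by blast
    next
      case False
      then obtain x where x: "x \<in> I" "x \<in> carrier R" "h x \<notin> m" using I(3) by blast
      have hx: "h x \<in> carrier S" using x(2) by simp
      obtain b where b: "b \<in> carrier S" "\<one>\<^bsub>S\<^esub> \<ominus>\<^bsub>S\<^esub> b \<otimes>\<^bsub>S\<^esub> h x \<in> m"
        using S.maximalideal_inv_mod[OF max hx x(3)] .
      from e_mult[OF S.m_closed[OF c(1) b(1)]]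
      obtain r where r: "r \<in> carrier R" "h r = e \<otimes>\<^bsub>S\<^esub> (c \<otimes>\<^bsub>S\<^esub> b)" ..
      \<comment> \<open>\<open>r\<close> inverts \<open>x\<close> modulo \<open>?M\<close>.\<close>
      have "h (\<one> \<ominus> r \<otimes> x) = \<one>\<^bsub>S\<^esub> \<ominus>\<^bsub>S\<^esub> e \<otimes>\<^bsub>S\<^esub> (c \<otimes>\<^bsub>S\<^esub> b) \<otimes>\<^bsub>S\<^esub> h x"
        using r x(2) by simp
      also have "\<dots> = (\<one>\<^bsub>S\<^esub> \<ominus>\<^bsub>S\<^esub> c \<otimes>\<^bsub>S\<^esub> e)
          \<oplus>\<^bsub>S\<^esub> (c \<otimes>\<^bsub>S\<^esub> e) \<otimes>\<^bsub>S\<^esub> (\<one>\<^bsub>S\<^esub> \<ominus>\<^bsub>S\<^esub> b \<otimes>\<^bsub>S\<^esub> h x)"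
        using e(1) b(1) c(1) hx by algebra
      also have "\<dots> \<in> m"
        using b c e(1) by (intro m.a_closed m.I_l_closed S.m_closed)
      finally have "\<one> \<ominus> r \<otimes> x \<in> ?M"
        using r(1) x(2) by simp
      then have "\<one> \<ominus> r \<otimes> x \<in> I" by (rule subsetD[OF I(2)])
      moreover have "r \<otimes> x \<in> I" using ideal.I_l_closed[OF I(1) x(1) r(1)] .
      ultimately have "(\<one> \<ominus> r \<otimes> x) \<oplus> r \<otimes> x \<in> I"
        by (rule additive_subgroup.a_closed[OF ideal.axioms(1)[OF I(1)]])
      moreover have "(\<one> \<ominus> r \<otimes> x) \<oplus> r \<otimes> x = \<one>" using r(1) x(2) by algebra
      ultimately show ?thesis using ideal.one_imp_carrier[OF I(1)] by simp
    qed
  qed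
qed

lemma (in ring_hom_cring) maximalideal_vimage_iff:
  assumes "primeideal m S" "e \<in> carrier S" "e \<notin> m"
    and "\<And>s. s \<in> carrier S \<Longrightarrow> \<exists>r\<in>carrier R. h r = e \<otimes>\<^bsub>S\<^esub> s"
  shows "maximalideal {r \<in> carrier R. h r \<in> m} R \<longleftrightarrow> maximalideal m S"
  using maximalideal_of_maximalideal_vimage[OF assms] maximalideal_vimage[OF _ assms(2-4)] by blast

lemma maximalideal_subset_carrier: "maximalideal m R \<Longrightarrow> m \<subseteq> carrier R"
  by (rule additive_subgroup.a_subset[OF ideal.axioms(1)[OF maximalideal.axioms(1)]])

lemma (in cring) mem_MaxSpec_VarI_iff:
  "m \<in> MaxSpec R \<inter> VarI R I \<longleftrightarrow> maximalideal m R \<and> I \<subseteq> m"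
  using maximalideal_prime[of m] unfolding MaxSpec_def VarI_def by auto

lemma (in cring) mem_MaxSpec_VarI_diff_iff:
  "m \<in> MaxSpec R \<inter> VarI R I - VarI R K \<longleftrightarrow> maximalideal m R \<and> I \<subseteq> m \<and> \<not> K \<subseteq> m"
  using maximalideal_prime[of m] unfolding MaxSpec_def VarI_def by auto

lemma (in primeideal) mult_mem_iff:
  assumes "x \<in> carrier R" "e \<in> carrier R" "e \<notin> I"
  shows "x \<otimes> e \<in> I \<longleftrightarrow> x \<in> I"
  using I_prime[OF assms(1,2)] I_r_closed[OF _ assms(2)] assms(3) by blast

lemma ex1_mem_iff_card_eq_1: "(\<exists>!x. x \<in> A) \<longleftrightarrow> finite A \<and> card A = 1"
proof -
  have "(\<exists>!x. x \<in> A) \<longleftrightarrow> (\<exists>x. A = {x})" by blast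
  also have "\<dots> \<longleftrightarrow> card A = 1" by (simp add: card_1_singleton_iff)
  also have "\<dots> \<longleftrightarrow> finite A \<and> card A = 1" using card.infinite by fastforce
  finally show ?thesis .
qed

lemma ex1_mem_image_iff:
  assumes "inj_on g U"
  shows "(\<exists>!y. y \<in> g ` U) \<longleftrightarrow> (\<exists>!x. x \<in> U)"
  using assms by (simp add: ex1_mem_iff_card_eq_1 finite_image_iff card_image)

lemma ex1_mem_Un_image_iff:
  assumes "inj_on g U" "inj_on h V" "g ` U \<inter> h ` V = {}"
  shows "(\<exists>!y. y \<in> g ` U \<union> h ` V) \<longleftrightarrow> finite U \<and> finite V \<and> card U + card V = 1"
proof -
  have "card (g ` U \<union> h ` V) = card U + card V" if "finite U" "finite V"
    using card_Un_disjoint[of "g ` U" "h ` V"] that assms by (simp add: card_image)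
  then show ?thesis
    unfolding ex1_mem_iff_card_eq_1 using assms(1,2) by (auto simp: finite_image_iff)
qed

lemma RDirProd_simps [simp]:
  "x \<otimes>\<^bsub>RDirProd R S\<^esub> y = (fst x \<otimes>\<^bsub>R\<^esub> fst y, snd x \<otimes>\<^bsub>S\<^esub> snd y)"
  "x \<oplus>\<^bsub>RDirProd R S\<^esub> y = (fst x \<oplus>\<^bsub>R\<^esub> fst y, snd x \<oplus>\<^bsub>S\<^esub> snd y)"
  "\<one>\<^bsub>RDirProd R S\<^esub> = (\<one>\<^bsub>R\<^esub>, \<one>\<^bsub>S\<^esub>)"
  "\<zero>\<^bsub>RDirProd R S\<^esub> = (\<zero>\<^bsub>R\<^esub>, \<zero>\<^bsub>S\<^esub>)"
  unfolding RDirProd_def DirProd_def by (simp_all add: monoid.defs split_beta)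

lemma amalg_simps [simp]:
  "monoid.mult (amalg R S f J) = monoid.mult (RDirProd R S)"
  "ring.add (amalg R S f J) = ring.add (RDirProd R S)"
  "monoid.one (amalg R S f J) = monoid.one (RDirProd R S)"
  "ring.zero (amalg R S f J) = ring.zero (RDirProd R S)"
  by (simp_all add: amalg_def)

locale amalgamation = ring_hom_cring R S f for R (structure) and S (structure) and f +
  fixes J assumes ideal_J: "ideal J S"
begin

sublocale J: ideal J S by (rule ideal_J)

abbreviation RJ where "RJ \<equiv> amalg R S f J"

lemma carrier_RJ: "carrier RJ = {(r, f r \<oplus>\<^bsub>S\<^esub> j) | r j. r \<in> carrier R \<and> j \<in> J}"
  by (simp add: amalg_def)

lemma RJ_memI: "r \<in> carrier R \<Longrightarrow> j \<in> J \<Longrightarrow> (r, f r \<oplus>\<^bsub>S\<^esub> j) \<in> carrier RJ"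
  unfolding carrier_RJ by blast

lemma RJ_memE:
  assumes "x \<in> carrier RJ"
  obtains r j where "x = (r, f r \<oplus>\<^bsub>S\<^esub> j)" "r \<in> carrier R" "j \<in> J"
  using assms unfolding carrier_RJ by blast

lemma diag_mem_RJ: "r \<in> carrier R \<Longrightarrow> (r, f r) \<in> carrier RJ"
  using RJ_memI[of r "\<zero>\<^bsub>S\<^esub>"] by simp

lemma zero_J_mem_RJ: "j \<in> J \<Longrightarrow> (\<zero>, j) \<in> carrier RJ"
  using RJ_memI[of \<zero> j] by simp

lemma RJ_mem_carrier: "x \<in> carrier RJ \<Longrightarrow> fst x \<in> carrier R \<and> snd x \<in> carrier S"
  by (erule RJ_memE) (simp add: J.Icarr)

lemma RJ_a_inv_closed:
  assumes "x \<in> carrier RJ"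
  shows "\<ominus>\<^bsub>RDirProd R S\<^esub> x \<in> carrier RJ"
proof -
  interpret D: ring "RDirProd R S" by (rule RDirProd_ring) unfold_locales
  obtain r j where x: "x = (r, f r \<oplus>\<^bsub>S\<^esub> j)" "r \<in> carrier R" "j \<in> J"
    using assms by (rule RJ_memE)
  have j: "j \<in> carrier S" using x(3) by (rule J.Icarr)
  have "\<ominus>\<^bsub>RDirProd R S\<^esub> x = (\<ominus> r, \<ominus>\<^bsub>S\<^esub> (f r \<oplus>\<^bsub>S\<^esub> j))"
    using x j by (intro D.minus_equality) (simp_all add: RDirProd_carrier R.l_neg S.l_neg)
  also have "\<dots> = (\<ominus> r, f (\<ominus> r) \<oplus>\<^bsub>S\<^esub> \<ominus>\<^bsub>S\<^esub> j)"
    using x j by (simp add: S.minus_add)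
  finally show ?thesis
    using RJ_memI[OF R.a_inv_closed[OF x(2)] J.a_inv_closed[OF x(3)]] by simp
qed

lemma RJ_add_closed:
  assumes "x \<in> carrier RJ" "y \<in> carrier RJ"
  shows "x \<oplus>\<^bsub>RDirProd R S\<^esub> y \<in> carrier RJ"
proof -
  obtain r j where x: "x = (r, f r \<oplus>\<^bsub>S\<^esub> j)" "r \<in> carrier R" "j \<in> J"
    using assms(1) by (rule RJ_memE)
  obtain r' j' where y: "y = (r', f r' \<oplus>\<^bsub>S\<^esub> j')" "r' \<in> carrier R" "j' \<in> J"
    using assms(2) by (rule RJ_memE)
  have "j \<in> carrier S" "j' \<in> carrier S" using x(3) y(3) by (simp_all add: J.Icarr)
  then have "(f r \<oplus>\<^bsub>S\<^esub> j) \<oplus>\<^bsub>S\<^esub> (f r' \<oplus>\<^bsub>S\<^esub> j') = f r \<oplus>\<^bsub>S\<^esub> f r' \<oplus>\<^bsub>S\<^esub> (j \<oplus>\<^bsub>S\<^esub> j')"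
    using hom_closed[OF x(2)] hom_closed[OF y(2)] by algebra
  then show ?thesis
    using x y RJ_memI[OF R.a_closed[OF x(2) y(2)] J.a_closed[OF x(3) y(3)]] by simp
qed

lemma RJ_mult_closed:
  assumes "x \<in> carrier RJ" "y \<in> carrier RJ"
  shows "x \<otimes>\<^bsub>RDirProd R S\<^esub> y \<in> carrier RJ"
proof -
  obtain r j where x: "x = (r, f r \<oplus>\<^bsub>S\<^esub> j)" "r \<in> carrier R" "j \<in> J"
    using assms(1) by (rule RJ_memE)
  obtain r' j' where y: "y = (r', f r' \<oplus>\<^bsub>S\<^esub> j')" "r' \<in> carrier R" "j' \<in> J"
    using assms(2) by (rule RJ_memE)
  have j: "j \<in> carrier S" "j' \<in> carrier S" using x(3) y(3) by (simp_all add: J.Icarr)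
  have "(f r \<oplus>\<^bsub>S\<^esub> j) \<otimes>\<^bsub>S\<^esub> (f r' \<oplus>\<^bsub>S\<^esub> j')
      = f r \<otimes>\<^bsub>S\<^esub> f r' \<oplus>\<^bsub>S\<^esub> (f r \<otimes>\<^bsub>S\<^esub> j' \<oplus>\<^bsub>S\<^esub> j \<otimes>\<^bsub>S\<^esub> f r' \<oplus>\<^bsub>S\<^esub> j \<otimes>\<^bsub>S\<^esub> j')"
    using hom_closed[OF x(2)] hom_closed[OF y(2)] j by algebra
  moreover have "f r \<otimes>\<^bsub>S\<^esub> j' \<oplus>\<^bsub>S\<^esub> j \<otimes>\<^bsub>S\<^esub> f r' \<oplus>\<^bsub>S\<^esub> j \<otimes>\<^bsub>S\<^esub> j' \<in> J"
    using x y j by (intro J.a_closed J.I_l_closed J.I_r_closed) simp_all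
  ultimately show ?thesis
    using x(1,2) y(1,2) RJ_memI[OF R.m_closed[OF x(2) y(2)]] by simp
qed

lemma cring_RJ: "cring RJ"
proof -
  interpret D: ring "RDirProd R S" by (rule RDirProd_ring) unfold_locales
  have sub: "carrier RJ \<subseteq> carrier (RDirProd R S)"
    using RJ_mem_carrier by (auto simp: RDirProd_carrier mem_Times_iff)
  have "subcring (carrier RJ) (RDirProd R S)"
  proof (rule D.subcringI[OF D.subringI[OF sub]])
    show "\<one>\<^bsub>RDirProd R S\<^esub> \<in> carrier RJ"
      using diag_mem_RJ[OF R.one_closed] by simp
    show "x \<otimes>\<^bsub>RDirProd R S\<^esub> y = y \<otimes>\<^bsub>RDirProd R S\<^esub> x" if "x \<in> carrier RJ" "y \<in> carrier RJ" for x y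
      using RJ_mem_carrier[OF that(1)] RJ_mem_carrier[OF that(2)] by (simp add: R.m_comm S.m_comm)
  qed (blast intro: RJ_a_inv_closed RJ_add_closed RJ_mult_closed)+
  moreover have "RJ = (RDirProd R S)\<lparr>carrier := carrier RJ\<rparr>"
    by (simp add: amalg_def)
  ultimately show ?thesis
    using D.subcring_iff[OF sub] by metis
qed

lemma ring_hom_cring_fst: "ring_hom_cring RJ R fst"
  by (intro ring_hom_cring.intro cring_RJ R.is_cring ring_hom_cring_axioms.intro ring_hom_memI)
    (simp_all add: RJ_mem_carrier)

lemma ring_hom_cring_snd: "ring_hom_cring RJ S snd"
  by (intro ring_hom_cring.intro cring_RJ S.is_cring ring_hom_cring_axioms.intro ring_hom_memI)
    (simp_all add: RJ_mem_carrier)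

lemma ring_hom_cring_diag: "ring_hom_cring R RJ (\<lambda>r. (r, f r))"
  by (intro ring_hom_cring.intro cring_RJ R.is_cring ring_hom_cring_axioms.intro ring_hom_memI)
    (simp_all add: diag_mem_RJ)

definition fst_vimage where "fst_vimage p = {x \<in> carrier RJ. fst x \<in> p}"

definition snd_vimage where "snd_vimage q = {x \<in> carrier RJ. snd x \<in> q}"

lemma primeideal_fst_vimage:
  assumes "primeideal p R"
  shows "primeideal (fst_vimage p) RJ"
proof -
  interpret fst: ring_hom_cring RJ R fst by (rule ring_hom_cring_fst)
  show ?thesis
    unfolding fst_vimage_def by (rule fst.ring.primeideal_vimage[OF cring_RJ assms])
qed

lemma primeideal_snd_vimage:
  assumes "primeideal q S"
  shows "primeideal (snd_vimage q) RJ"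
proof -
  interpret snd: ring_hom_cring RJ S snd by (rule ring_hom_cring_snd)
  show ?thesis
    unfolding snd_vimage_def by (rule snd.ring.primeideal_vimage[OF cring_RJ assms])
qed

lemma maximalideal_fst_vimage_iff:
  assumes "primeideal p R"
  shows "maximalideal (fst_vimage p) RJ \<longleftrightarrow> maximalideal p R"
proof -
  interpret fst: ring_hom_cring RJ R fst by (rule ring_hom_cring_fst)
  have "\<one> \<notin> p"
    using assms ideal.one_imp_carrier primeideal.axioms(1) primeideal.I_notcarr by metis
  moreover have "\<exists>x\<in>carrier RJ. fst x = \<one> \<otimes> r" if "r \<in> carrier R" for r
    using diag_mem_RJ[OF that] that by force
  ultimately show ?thesis
    unfolding fst_vimage_def by (rule fst.maximalideal_vimage_iff[OF assms R.one_closed])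
qed

lemma maximalideal_snd_vimage_iff:
  assumes "primeideal n S" "\<not> J \<subseteq> n"
  shows "maximalideal (snd_vimage n) RJ \<longleftrightarrow> maximalideal n S"
proof -
  interpret snd: ring_hom_cring RJ S snd by (rule ring_hom_cring_snd)
  obtain j0 where j0: "j0 \<in> J" "j0 \<notin> n" using assms(2) by blast
  have "\<exists>x\<in>carrier RJ. snd x = j0 \<otimes>\<^bsub>S\<^esub> s" if "s \<in> carrier S" for s
    using zero_J_mem_RJ[OF J.I_r_closed[OF j0(1) that]] by force
  then show ?thesis
    unfolding snd_vimage_def by (rule snd.maximalideal_vimage_iff[OF assms(1) J.Icarr[OF j0(1)] j0(2)])
qed

lemma primeideal_diag_vimage:
  assumes "primeideal P RJ"
  shows "primeideal {r \<in> carrier R. (r, f r) \<in> P} R"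
proof -
  interpret diag: ring_hom_cring R RJ "\<lambda>r. (r, f r)" by (rule ring_hom_cring_diag)
  show ?thesis by (rule diag.ring.primeideal_vimage[OF R.is_cring assms])
qed

lemma primeideal_eq_fst_vimage:
  assumes P: "primeideal P RJ" and J_P: "\<And>j. j \<in> J \<Longrightarrow> (\<zero>, j) \<in> P"
  shows "P = fst_vimage {r \<in> carrier R. (r, f r) \<in> P}"
proof -
  interpret P: primeideal P RJ by (rule P)
  have "x \<in> P \<longleftrightarrow> (fst x, f (fst x)) \<in> P" if "x \<in> carrier RJ" for x
  proof -
    obtain r j where x: "x = (r, f r \<oplus>\<^bsub>S\<^esub> j)" "r \<in> carrier R" "j \<in> J"
      using \<open>x \<in> carrier RJ\<close> by (rule RJ_memE)
    have j: "j \<in> carrier S" using x(3) by (rule J.Icarr)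
    have "x = (r, f r) \<oplus>\<^bsub>RJ\<^esub> (\<zero>, j)"
      using x(1,2) j by simp
    moreover have "(r, f r) = x \<oplus>\<^bsub>RJ\<^esub> (\<zero>, \<ominus>\<^bsub>S\<^esub> j)"
      using x(1,2) j by (simp add: S.a_assoc S.r_neg)
    moreover have "(\<zero>, j) \<in> P" "(\<zero>, \<ominus>\<^bsub>S\<^esub> j) \<in> P"
      using J_P x(3) J.a_inv_closed by blast+
    ultimately have "x \<in> P \<longleftrightarrow> (r, f r) \<in> P"
      using additive_subgroup.a_closed[OF P.additive_subgroup_axioms] by metis
    then show ?thesis using x(1) by simp
  qed
  then show ?thesis
    unfolding fst_vimage_def using P.a_subset RJ_mem_carrier by blast
qed

lemma primeideal_eq_snd_vimage:
  assumes P: "primeideal P RJ" and j0: "j0 \<in> J" "(\<zero>, j0) \<notin> P"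
  shows "P = snd_vimage {s \<in> carrier S. (\<zero>, s \<otimes>\<^bsub>S\<^esub> j0) \<in> P}"
proof (rule Set.set_eqI)
  fix x
  show "x \<in> P \<longleftrightarrow> x \<in> snd_vimage {s \<in> carrier S. (\<zero>, s \<otimes>\<^bsub>S\<^esub> j0) \<in> P}"
  proof (cases "x \<in> carrier RJ")
    case True
    \<comment> \<open>Multiplying by \<open>(\<zero>, j0) \<notin> P\<close> preserves membership in \<open>P\<close> and kills the first
      component.\<close>
    have "x \<otimes>\<^bsub>RJ\<^esub> (\<zero>, j0) = (\<zero>, snd x \<otimes>\<^bsub>S\<^esub> j0)"
      using RJ_mem_carrier[OF True] by simp
    then show ?thesis
      using primeideal.mult_mem_iff[OF P True zero_J_mem_RJ[OF j0(1)] j0(2)] RJ_mem_carrier[OF True] True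
      unfolding snd_vimage_def by simp
  next
    case False
    moreover have "P \<subseteq> carrier RJ"
      by (rule additive_subgroup.a_subset[OF ideal.axioms(1)[OF primeideal.axioms(1)[OF P]]])
    ultimately show ?thesis unfolding snd_vimage_def by blast
  qed
qed

lemma primeideal_mult_zero_J_iff:
  assumes P: "primeideal P RJ" and j0: "j0 \<in> J" "(\<zero>, j0) \<notin> P"
    and "a \<in> carrier S" "b \<in> carrier S"
  shows "(\<zero>, a \<otimes>\<^bsub>S\<^esub> b \<otimes>\<^bsub>S\<^esub> j0) \<in> P \<longleftrightarrow> (\<zero>, a \<otimes>\<^bsub>S\<^esub> j0) \<in> P \<or> (\<zero>, b \<otimes>\<^bsub>S\<^esub> j0) \<in> P"
proof -
  have j0_S: "j0 \<in> carrier S" using j0(1) by (rule J.Icarr)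
  have mult_j0: "(\<zero>, s \<otimes>\<^bsub>S\<^esub> j0) \<in> carrier RJ" if "s \<in> carrier S" for s
    using zero_J_mem_RJ[OF J.I_l_closed[OF j0(1) that]] .
  have "(\<zero>, a \<otimes>\<^bsub>S\<^esub> j0) \<otimes>\<^bsub>RJ\<^esub> (\<zero>, b \<otimes>\<^bsub>S\<^esub> j0)
      = (\<zero>, a \<otimes>\<^bsub>S\<^esub> b \<otimes>\<^bsub>S\<^esub> j0) \<otimes>\<^bsub>RJ\<^esub> (\<zero>, j0)"
    using assms(4,5) j0_S by (simp add: S.m_ac)
  then have "(\<zero>, a \<otimes>\<^bsub>S\<^esub> b \<otimes>\<^bsub>S\<^esub> j0) \<in> P \<longleftrightarrow> (\<zero>, a \<otimes>\<^bsub>S\<^esub> j0) \<otimes>\<^bsub>RJ\<^esub> (\<zero>, b \<otimes>\<^bsub>S\<^esub> j0) \<in> P"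
    using primeideal.mult_mem_iff[OF P mult_j0[OF S.m_closed[OF assms(4,5)]] zero_J_mem_RJ[OF j0(1)] j0(2)]
    by simp
  also have "\<dots> \<longleftrightarrow> (\<zero>, a \<otimes>\<^bsub>S\<^esub> j0) \<in> P \<or> (\<zero>, b \<otimes>\<^bsub>S\<^esub> j0) \<in> P"
    using primeideal.I_prime[OF P] ideal.I_r_closed ideal.I_l_closed primeideal.axioms(1)[OF P]
      mult_j0 assms(4,5) by meson
  finally show ?thesis .
qed

lemma primeideal_snd_part:
  assumes P: "primeideal P RJ" and j0: "j0 \<in> J" "(\<zero>, j0) \<notin> P"
  defines "q \<equiv> {s \<in> carrier S. (\<zero>, s \<otimes>\<^bsub>S\<^esub> j0) \<in> P}"
  shows "primeideal q S" "\<not> J \<subseteq> q"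
proof -
  interpret P: primeideal P RJ by (rule P)
  have j0_S: "j0 \<in> carrier S" using j0(1) by (rule J.Icarr)
  have mult_q: "a \<otimes>\<^bsub>S\<^esub> b \<in> q \<longleftrightarrow> a \<in> q \<or> b \<in> q" if "a \<in> carrier S" "b \<in> carrier S" for a b
    using primeideal_mult_zero_J_iff[OF P j0 that] that unfolding q_def by simp
  have "ideal q S"
  proof (rule S.cring_idealI)
    show "q \<subseteq> carrier S" unfolding q_def by blast
    show "\<zero>\<^bsub>S\<^esub> \<in> q"
      using additive_subgroup.zero_closed[OF P.additive_subgroup_axioms] j0_S unfolding q_def by simp
    show "a \<oplus>\<^bsub>S\<^esub> b \<in> q" if "a \<in> q" "b \<in> q" for a b
    proof -
      have "a \<in> carrier S" "b \<in> carrier S" using that unfolding q_def by simp_all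
      moreover have "(\<zero>, a \<otimes>\<^bsub>S\<^esub> j0) \<oplus>\<^bsub>RJ\<^esub> (\<zero>, b \<otimes>\<^bsub>S\<^esub> j0) \<in> P"
        using that additive_subgroup.a_closed[OF P.additive_subgroup_axioms] unfolding q_def by blast
      ultimately show ?thesis
        using j0_S unfolding q_def by (simp add: S.l_distr)
    qed
    show "x \<otimes>\<^bsub>S\<^esub> a \<in> q" if "a \<in> q" "x \<in> carrier S" for a x
      using mult_q[of x a] that unfolding q_def by simp
  qed
  moreover have "\<one>\<^bsub>S\<^esub> \<notin> q"
    using j0(2) j0_S unfolding q_def by simp
  then have "carrier S \<noteq> q" using S.one_closed by blast
  ultimately show "primeideal q S"
    using mult_q by (intro primeidealI S.is_cring) auto
  have "(\<zero>, j0 \<otimes>\<^bsub>S\<^esub> j0) = (\<zero>, j0) \<otimes>\<^bsub>RJ\<^esub> (\<zero>, j0)" by simp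
  then have "j0 \<notin> q"
    using P.mult_mem_iff[OF zero_J_mem_RJ[OF j0(1)] zero_J_mem_RJ[OF j0(1)] j0(2)] j0(2)
    unfolding q_def by simp
  then show "\<not> J \<subseteq> q" using j0(1) by blast
qed

lemma primeideal_RJ_cases:
  assumes "primeideal P RJ"
  obtains (fst) p where "primeideal p R" "P = fst_vimage p"
    | (snd) q where "primeideal q S" "\<not> J \<subseteq> q" "P = snd_vimage q"
proof (cases "\<forall>j\<in>J. (\<zero>, j) \<in> P")
  case True
  then have "\<And>j. j \<in> J \<Longrightarrow> (\<zero>, j) \<in> P" by blast
  from fst[OF primeideal_diag_vimage[OF assms] primeideal_eq_fst_vimage[OF assms this]]
  show ?thesis .
next
  case False
  then obtain j0 where j0: "j0 \<in> J" "(\<zero>, j0) \<notin> P" by blast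
  from snd[OF primeideal_snd_part[OF assms j0] primeideal_eq_snd_vimage[OF assms j0]]
  show ?thesis .
qed

lemma maximalideal_RJ_iff:
  "maximalideal M RJ \<longleftrightarrow>
    (\<exists>m. maximalideal m R \<and> M = fst_vimage m) \<or> (\<exists>n. maximalideal n S \<and> \<not> J \<subseteq> n \<and> M = snd_vimage n)"
  (is "_ \<longleftrightarrow> ?fst \<or> ?snd")
proof
  assume M: "maximalideal M RJ"
  then have "primeideal M RJ" by (rule cring.maximalideal_prime[OF cring_RJ])
  then show "?fst \<or> ?snd"
  proof (cases rule: primeideal_RJ_cases)
    case (fst p)
    with M have "maximalideal p R" using maximalideal_fst_vimage_iff by simp
    then show ?thesis using fst(2) by blast
  next
    case (snd q)
    with M have "maximalideal q S" using maximalideal_snd_vimage_iff by simp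
    then show ?thesis using snd(2,3) by blast
  qed
next
  assume "?fst \<or> ?snd"
  then show "maximalideal M RJ"
  proof
    assume ?fst
    then obtain m where "maximalideal m R" "M = fst_vimage m" by blast
    then show ?thesis using maximalideal_fst_vimage_iff R.maximalideal_prime by simp
  next
    assume ?snd
    then obtain n where "maximalideal n S" "\<not> J \<subseteq> n" "M = snd_vimage n" by blast
    then show ?thesis using maximalideal_snd_vimage_iff S.maximalideal_prime by simp
  qed
qed

lemma fst_vimage_subset_iff:
  assumes "p \<subseteq> carrier R"
  shows "fst_vimage p \<subseteq> fst_vimage m \<longleftrightarrow> p \<subseteq> m"
proof
  assume sub: "fst_vimage p \<subseteq> fst_vimage m"
  show "p \<subseteq> m"
  proof
    fix r assume "r \<in> p"
    then have "(r, f r) \<in> fst_vimage p"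
      using assms diag_mem_RJ unfolding fst_vimage_def by auto
    then show "r \<in> m" using sub unfolding fst_vimage_def by auto
  qed
qed (auto simp: fst_vimage_def)

lemma fst_vimage_subset_snd_vimage:
  assumes "ideal p R" "fst_vimage p \<subseteq> snd_vimage n"
  shows "J \<subseteq> n"
proof
  fix j assume "j \<in> J"
  then have "(\<zero>, j) \<in> fst_vimage p"
    using zero_J_mem_RJ additive_subgroup.zero_closed[OF ideal.axioms(1)[OF assms(1)]]
    unfolding fst_vimage_def by simp
  then show "j \<in> n" using assms(2) unfolding snd_vimage_def by auto
qed

lemma snd_vimage_subset_iff:
  assumes "ideal q S" "primeideal n S" "\<not> J \<subseteq> n"
  shows "snd_vimage q \<subseteq> snd_vimage n \<longleftrightarrow> q \<subseteq> n"
proof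
  assume sub: "snd_vimage q \<subseteq> snd_vimage n"
  obtain j0 where j0: "j0 \<in> J" "j0 \<notin> n" using assms(3) by blast
  have j0_S: "j0 \<in> carrier S" using j0(1) by (rule J.Icarr)
  show "q \<subseteq> n"
  proof
    fix s assume s: "s \<in> q"
    have s_S: "s \<in> carrier S" using ideal.Icarr[OF assms(1) s] .
    have "(\<zero>, s \<otimes>\<^bsub>S\<^esub> j0) \<in> snd_vimage q"
      using zero_J_mem_RJ[OF J.I_l_closed[OF j0(1) s_S]] ideal.I_r_closed[OF assms(1) s j0_S]
      unfolding snd_vimage_def by simp
    then have "s \<otimes>\<^bsub>S\<^esub> j0 \<in> n" using sub unfolding snd_vimage_def by auto
    then show "s \<in> n" using primeideal.I_prime[OF assms(2) s_S j0_S] j0(2) by blast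
  qed
qed (auto simp: snd_vimage_def)

lemma snd_vimage_subset_fst_vimage_iff:
  assumes "ideal q S"
  shows "snd_vimage q \<subseteq> fst_vimage m \<longleftrightarrow> {r \<in> carrier R. f r \<in> q <+>\<^bsub>S\<^esub> J} \<subseteq> m"
proof
  assume sub: "snd_vimage q \<subseteq> fst_vimage m"
  show "{r \<in> carrier R. f r \<in> q <+>\<^bsub>S\<^esub> J} \<subseteq> m"
  proof
    fix r assume "r \<in> {r \<in> carrier R. f r \<in> q <+>\<^bsub>S\<^esub> J}"
    then obtain a j where r: "r \<in> carrier R" "a \<in> q" "j \<in> J" "f r = a \<oplus>\<^bsub>S\<^esub> j"
      unfolding set_add_def' by blast
    have "a \<in> carrier S" "j \<in> carrier S" using ideal.Icarr[OF assms r(2)] J.Icarr[OF r(3)] .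
    then have "f r \<oplus>\<^bsub>S\<^esub> \<ominus>\<^bsub>S\<^esub> j = a" using r(4) by algebra
    then have "(r, f r \<oplus>\<^bsub>S\<^esub> \<ominus>\<^bsub>S\<^esub> j) \<in> snd_vimage q"
      using RJ_memI[OF r(1) J.a_inv_closed[OF r(3)]] r(2) unfolding snd_vimage_def by simp
    then show "r \<in> m" using sub unfolding fst_vimage_def by auto
  qed
next
  assume sub: "{r \<in> carrier R. f r \<in> q <+>\<^bsub>S\<^esub> J} \<subseteq> m"
  show "snd_vimage q \<subseteq> fst_vimage m"
  proof
    fix x assume x: "x \<in> snd_vimage q"
    then have "x \<in> carrier RJ" unfolding snd_vimage_def by simp
    then obtain r j where rj: "x = (r, f r \<oplus>\<^bsub>S\<^esub> j)" "r \<in> carrier R" "j \<in> J"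
      by (rule RJ_memE)
    have "j \<in> carrier S" using rj(3) by (rule J.Icarr)
    then have "f r = (f r \<oplus>\<^bsub>S\<^esub> j) \<oplus>\<^bsub>S\<^esub> \<ominus>\<^bsub>S\<^esub> j" using hom_closed[OF rj(2)] by algebra
    moreover have "f r \<oplus>\<^bsub>S\<^esub> j \<in> q" using x rj(1) unfolding snd_vimage_def by simp
    ultimately have "f r \<in> q <+>\<^bsub>S\<^esub> J"
      using J.a_inv_closed[OF rj(3)] unfolding set_add_def' by blast
    then show "x \<in> fst_vimage m"
      using sub rj(1,2) \<open>x \<in> carrier RJ\<close> unfolding fst_vimage_def by auto
  qed
qed

lemma inj_on_fst_vimage: "inj_on fst_vimage {p. p \<subseteq> carrier R}"
proof (rule inj_onI)
  fix p p' assume "p \<in> {p. p \<subseteq> carrier R}" "p' \<in> {p. p \<subseteq> carrier R}"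
    and eq: "fst_vimage p = fst_vimage p'"
  then have "p \<subseteq> p'" "p' \<subseteq> p"
    using fst_vimage_subset_iff[of p p'] fst_vimage_subset_iff[of p' p] by simp_all
  then show "p = p'" by (rule subset_antisym)
qed

lemma inj_on_snd_vimage: "inj_on snd_vimage {n. primeideal n S \<and> \<not> J \<subseteq> n}"
proof (rule inj_onI)
  fix n n' assume "n \<in> {n. primeideal n S \<and> \<not> J \<subseteq> n}" "n' \<in> {n. primeideal n S \<and> \<not> J \<subseteq> n}"
    and eq: "snd_vimage n = snd_vimage n'"
  then have n: "primeideal n S" "\<not> J \<subseteq> n" and n': "primeideal n' S" "\<not> J \<subseteq> n'" by simp_all
  have "n \<subseteq> n'" "n' \<subseteq> n"
    using snd_vimage_subset_iff[OF primeideal.axioms(1)[OF n(1)] n'] 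
      snd_vimage_subset_iff[OF primeideal.axioms(1)[OF n'(1)] n] eq by simp_all
  then show "n = n'" by (rule subset_antisym)
qed

lemma maximalideals_above_fst_vimage:
  assumes "primeideal p R"
  shows "{M. maximalideal M RJ \<and> fst_vimage p \<subseteq> M} = fst_vimage ` {m. maximalideal m R \<and> p \<subseteq> m}"
proof -
  have p_ideal: "ideal p R" using assms by (rule primeideal.axioms(1))
  have p_sub: "p \<subseteq> carrier R" by (rule additive_subgroup.a_subset[OF ideal.axioms(1)[OF p_ideal]])
  show ?thesis
  proof (intro equalityI subsetI)
    fix M assume "M \<in> {M. maximalideal M RJ \<and> fst_vimage p \<subseteq> M}"
    then have max: "maximalideal M RJ" and sub: "fst_vimage p \<subseteq> M" by simp_all
    from max have "(\<exists>m. maximalideal m R \<and> M = fst_vimage m) \<or> (\<exists>n. maximalideal n S \<and> \<not> J \<subseteq> n \<and> M = snd_vimage n)"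
      by (rule maximalideal_RJ_iff[THEN iffD1])
    then show "M \<in> fst_vimage ` {m. maximalideal m R \<and> p \<subseteq> m}"
    proof (elim disjE exE conjE)
      fix m assume m: "maximalideal m R" "M = fst_vimage m"
      have "p \<subseteq> m" using sub unfolding m(2) fst_vimage_subset_iff[OF p_sub] .
      with m(1) show ?thesis by (intro image_eqI[where f = fst_vimage, OF m(2)]) simp
    next
      fix n assume n: "maximalideal n S" "\<not> J \<subseteq> n" "M = snd_vimage n"
      have "J \<subseteq> n" using fst_vimage_subset_snd_vimage[OF p_ideal] sub unfolding n(3) .
      with n(2) show ?thesis by contradiction
    qed
  next
    fix M assume "M \<in> fst_vimage ` {m. maximalideal m R \<and> p \<subseteq> m}"
    then obtain m where M_m: "M = fst_vimage m" and "m \<in> {m. maximalideal m R \<and> p \<subseteq> m}"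
      by (rule imageE)
    then have m: "maximalideal m R" "p \<subseteq> m" by simp_all
    have "maximalideal M RJ"
      unfolding M_m maximalideal_fst_vimage_iff[OF R.maximalideal_prime[OF m(1)]] by (rule m(1))
    moreover have "fst_vimage p \<subseteq> M"
      unfolding M_m fst_vimage_subset_iff[OF p_sub] by (rule m(2))
    ultimately show "M \<in> {M. maximalideal M RJ \<and> fst_vimage p \<subseteq> M}" by simp
  qed
qed

lemma maximalideal_above_snd_vimage_iff:
  assumes "ideal q S"
  shows "maximalideal M RJ \<and> snd_vimage q \<subseteq> M \<longleftrightarrow>
    (\<exists>n. maximalideal n S \<and> q \<subseteq> n \<and> \<not> J \<subseteq> n \<and> M = snd_vimage n) \<or>
    (\<exists>m. maximalideal m R \<and> {r \<in> carrier R. f r \<in> q <+>\<^bsub>S\<^esub> J} \<subseteq> m \<and> M = fst_vimage m)"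
  (is "_ \<longleftrightarrow> ?snd \<or> ?fst")
proof
  assume "maximalideal M RJ \<and> snd_vimage q \<subseteq> M"
  then have max: "maximalideal M RJ" and sub: "snd_vimage q \<subseteq> M" by simp_all
  from max have "(\<exists>m. maximalideal m R \<and> M = fst_vimage m) \<or> (\<exists>n. maximalideal n S \<and> \<not> J \<subseteq> n \<and> M = snd_vimage n)"
    by (rule maximalideal_RJ_iff[THEN iffD1])
  then show "?snd \<or> ?fst"
  proof (elim disjE exE conjE)
    fix m assume m: "maximalideal m R" "M = fst_vimage m"
    have "{r \<in> carrier R. f r \<in> q <+>\<^bsub>S\<^esub> J} \<subseteq> m"
      using sub unfolding m(2) snd_vimage_subset_fst_vimage_iff[OF assms] .
    with m(1) have ?fst unfolding m(2) by blast
    then show ?thesis ..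
  next
    fix n assume n: "maximalideal n S" "\<not> J \<subseteq> n" "M = snd_vimage n"
    have "q \<subseteq> n"
      using sub unfolding n(3) snd_vimage_subset_iff[OF assms S.maximalideal_prime[OF n(1)] n(2)] .
    with n(1,2) have ?snd unfolding n(3) by blast
    then show ?thesis ..
  qed
next
  assume "?snd \<or> ?fst"
  then show "maximalideal M RJ \<and> snd_vimage q \<subseteq> M"
  proof (elim disjE exE conjE)
    fix n assume n: "maximalideal n S" "q \<subseteq> n" "\<not> J \<subseteq> n" "M = snd_vimage n"
    then show ?thesis
      using maximalideal_snd_vimage_iff[OF S.maximalideal_prime[OF n(1)] n(3)]
        snd_vimage_subset_iff[OF assms S.maximalideal_prime[OF n(1)] n(3)] by simp
  next
    fix m assume m: "maximalideal m R" "{r \<in> carrier R. f r \<in> q <+>\<^bsub>S\<^esub> J} \<subseteq> m" "M = fst_vimage m"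
    then show ?thesis
      using maximalideal_fst_vimage_iff[OF R.maximalideal_prime[OF m(1)]]
        snd_vimage_subset_fst_vimage_iff[OF assms] by simp
  qed
qed

lemma maximalideals_above_snd_vimage:
  assumes "ideal q S"
  shows "{M. maximalideal M RJ \<and> snd_vimage q \<subseteq> M} =
    snd_vimage ` ((MaxSpec S \<inter> VarI S q) - VarI S J) \<union>
    fst_vimage ` (MaxSpec R \<inter> VarI R {r \<in> carrier R. f r \<in> q <+>\<^bsub>S\<^esub> J})"
  (is "_ = snd_vimage ` ?N \<union> fst_vimage ` ?M")
proof (intro equalityI subsetI)
  fix M assume "M \<in> {M. maximalideal M RJ \<and> snd_vimage q \<subseteq> M}"
  then show "M \<in> snd_vimage ` ?N \<union> fst_vimage ` ?M"
    unfolding mem_Collect_eq maximalideal_above_snd_vimage_iff[OF assms]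
  proof (elim disjE exE conjE)
    fix n assume n: "maximalideal n S" "q \<subseteq> n" "\<not> J \<subseteq> n" "M = snd_vimage n"
    then have "n \<in> ?N" unfolding S.mem_MaxSpec_VarI_diff_iff by simp
    then show ?thesis by (intro UnI1 image_eqI[where f = snd_vimage, OF n(4)])
  next
    fix m assume m: "maximalideal m R" "{r \<in> carrier R. f r \<in> q <+>\<^bsub>S\<^esub> J} \<subseteq> m" "M = fst_vimage m"
    then have "m \<in> ?M" unfolding R.mem_MaxSpec_VarI_iff by simp
    then show ?thesis by (intro UnI2 image_eqI[where f = fst_vimage, OF m(3)])
  qed
next
  fix M assume "M \<in> snd_vimage ` ?N \<union> fst_vimage ` ?M"
  then have "(\<exists>n. maximalideal n S \<and> q \<subseteq> n \<and> \<not> J \<subseteq> n \<and> M = snd_vimage n) \<or>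
    (\<exists>m. maximalideal m R \<and> {r \<in> carrier R. f r \<in> q <+>\<^bsub>S\<^esub> J} \<subseteq> m \<and> M = fst_vimage m)"
  proof (elim UnE imageE)
    fix n assume "n \<in> ?N" "M = snd_vimage n"
    then show ?thesis unfolding S.mem_MaxSpec_VarI_diff_iff by blast
  next
    fix m assume "m \<in> ?M" "M = fst_vimage m"
    then show ?thesis unfolding R.mem_MaxSpec_VarI_iff by blast
  qed
  then show "M \<in> {M. maximalideal M RJ \<and> snd_vimage q \<subseteq> M}"
    unfolding mem_Collect_eq maximalideal_above_snd_vimage_iff[OF assms] .
qed

lemma ex1_maximalideal_above_fst_vimage_iff:
  assumes "primeideal p R"
  shows "(\<exists>!M. maximalideal M RJ \<and> fst_vimage p \<subseteq> M) \<longleftrightarrow> (\<exists>!m. maximalideal m R \<and> p \<subseteq> m)"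
proof -
  have "inj_on fst_vimage {m. maximalideal m R \<and> p \<subseteq> m}"
    by (rule inj_on_subset[OF inj_on_fst_vimage]) (use maximalideal_subset_carrier in blast)
  then have "(\<exists>!M. M \<in> {M. maximalideal M RJ \<and> fst_vimage p \<subseteq> M}) \<longleftrightarrow>
      (\<exists>!m. m \<in> {m. maximalideal m R \<and> p \<subseteq> m})"
    unfolding maximalideals_above_fst_vimage[OF assms] by (rule ex1_mem_image_iff)
  then show ?thesis by simp
qed

lemma ex1_maximalideal_above_snd_vimage_iff:
  assumes "ideal q S"
  shows "(\<exists>!M. maximalideal M RJ \<and> snd_vimage q \<subseteq> M) \<longleftrightarrow>
    (let A = (MaxSpec S \<inter> VarI S q) - VarI S J;
         B = MaxSpec R \<inter> VarI R {r \<in> carrier R. f r \<in> q <+>\<^bsub>S\<^esub> J}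
     in finite A \<and> finite B \<and> card A + card B = 1)"
proof -
  let ?A = "(MaxSpec S \<inter> VarI S q) - VarI S J"
  let ?B = "MaxSpec R \<inter> VarI R {r \<in> carrier R. f r \<in> q <+>\<^bsub>S\<^esub> J}"
  have A: "primeideal n S \<and> \<not> J \<subseteq> n" if "n \<in> ?A" for n
    using that S.maximalideal_prime unfolding S.mem_MaxSpec_VarI_diff_iff by blast
  have B: "maximalideal m R" if "m \<in> ?B" for m
    using that unfolding R.mem_MaxSpec_VarI_iff by blast
  have "inj_on snd_vimage ?A"
    by (rule inj_on_subset[OF inj_on_snd_vimage]) (use A in blast)
  moreover have "inj_on fst_vimage ?B"
    by (rule inj_on_subset[OF inj_on_fst_vimage]) (use B maximalideal_subset_carrier in blast)
  moreover have "snd_vimage ` ?A \<inter> fst_vimage ` ?B = {}"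
  proof (rule ccontr)
    assume "snd_vimage ` ?A \<inter> fst_vimage ` ?B \<noteq> {}"
    then obtain n m where n: "n \<in> ?A" and m: "m \<in> ?B" and eq: "snd_vimage n = fst_vimage m"
      by blast
    have "J \<subseteq> n"
      by (rule fst_vimage_subset_snd_vimage[OF maximalideal.axioms(1)[OF B[OF m]]]) (simp add: eq)
    with A[OF n] show False by blast
  qed
  ultimately have "(\<exists>!M. M \<in> snd_vimage ` ?A \<union> fst_vimage ` ?B) \<longleftrightarrow>
      finite ?A \<and> finite ?B \<and> card ?A + card ?B = 1"
    by (rule ex1_mem_Un_image_iff)
  then show ?thesis
    unfolding maximalideals_above_snd_vimage[OF assms, symmetric] Let_def by simp
qed

lemma pm_ring_RJ_iff:
  "pm_ring RJ \<longleftrightarrow>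
    (\<forall>p. primeideal p R \<longrightarrow> (\<exists>!M. maximalideal M RJ \<and> fst_vimage p \<subseteq> M)) \<and>
    (\<forall>q. primeideal q S \<and> \<not> J \<subseteq> q \<longrightarrow> (\<exists>!M. maximalideal M RJ \<and> snd_vimage q \<subseteq> M))"
  (is "_ \<longleftrightarrow> ?fst \<and> ?snd")
proof
  assume "pm_ring RJ"
  then have pm: "\<exists>!M. maximalideal M RJ \<and> P \<subseteq> M" if "primeideal P RJ" for P
    using that unfolding pm_ring_def by blast
  show "?fst \<and> ?snd"
  proof (intro conjI allI impI)
    fix p assume "primeideal p R"
    then show "\<exists>!M. maximalideal M RJ \<and> fst_vimage p \<subseteq> M"
      by (rule pm[OF primeideal_fst_vimage])
  next
    fix q assume "primeideal q S \<and> \<not> J \<subseteq> q"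
    then show "\<exists>!M. maximalideal M RJ \<and> snd_vimage q \<subseteq> M"
      by (rule pm[OF primeideal_snd_vimage[OF conjunct1]])
  qed
next
  assume H: "?fst \<and> ?snd"
  show "pm_ring RJ" unfolding pm_ring_def
  proof (intro allI impI)
    fix P assume "primeideal P RJ"
    then show "\<exists>!M. maximalideal M RJ \<and> P \<subseteq> M"
    proof (cases rule: primeideal_RJ_cases)
      case (fst p)
      then show ?thesis using H by simp
    next
      case (snd q)
      then show ?thesis using H by simp
    qed
  qed
qed

end

theorem theorem3p4:
  fixes R :: "('a, 'm) ring_scheme" and S :: "('b, 'n) ring_scheme"
    and f :: "'a \<Rightarrow> 'b" and J :: "'b set"
  assumes "cring R" and "cring S"
    and "f \<in> ring_hom R S"
    and "ideal J S" and "J \<noteq> {\<zero>\<^bsub>S\<^esub>}" and "J \<noteq> carrier S"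
  shows "pm_ring (amalg R S f J) \<longleftrightarrow>
    (pm_ring R \<and>
     (\<forall>q. primeideal q S \<and> \<not> J \<subseteq> q \<longrightarrow>
        (let A = (MaxSpec S \<inter> VarI S q) - VarI S J;
             B = MaxSpec R \<inter> VarI R {r \<in> carrier R. f r \<in> q <+>\<^bsub>S\<^esub> J}
         in finite A \<and> finite B \<and> card A + card B = 1)))"
proof -
  interpret amalgamation R S f J
    using assms(1-4) by (simp add: amalgamation_def amalgamation_axioms_def ring_hom_cring_def ring_hom_cring_axioms_def)
  show ?thesis
    unfolding pm_ring_RJ_iff pm_ring_def[of R]
    by (simp add: ex1_maximalideal_above_fst_vimage_iff ex1_maximalideal_above_snd_vimage_iff primeideal.axioms(1))
qed

end
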